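(* Let $x'=f(x)$, $x\in\mathbb R^d_{>0}$, be the deterministic system of a reaction network with species $X_1,\dots,X_d$, and let $\theta,\mu>0$ be such that there exists a positive steady state $x^*$ with $x^*_1=\mu/\theta$. Suppose: (1) the system admits $k$ linearly independent conservation relations $u^i\cdot x(t)=M_i$ ($i=1,\dots,k$) with $u^i\in\mathbb R^d_{>0}$, written after reordering of coordinates as $[U\,|\,I]x=M$ with $U$ a $k\times\bar d$ matrix, $\bar d=d-k$, $I$ the $k\times k$ identity, and with $u^1_1\ne 0$; (2) all eigenvalues of $J(x^* )$ have strictly negative real parts; (3) $H_2(0)>0$ if $\bar d$ is odd and $H_2(0)<0$ if $\bar d$ is even. Then, for sufficiently small $\theta$ and $\mu$ and sufficiently large initial value $z(0)$ of the control species, all eigenvalues of $\bar J(x^*,z^* )$ have strictly negative real parts; that is, the positive steady state $(x^*,z^* )$ of the union system of the given system and the basic ACR system $X_1+Z\xrightarrow{\theta}2Z$, $Z\xrightarrow{\mu}X_1$ is linearly stable.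
   Context: Reduced system of the original network: using the conservation relations, $x_{\bar d+j}=M_j-\sum_{i=1}^{\bar d}u^j_ix_i$ for $j=1,\dots,k$, and $g_i(x_1,\dots,x_{\bar d})=f_i(x_1,\dots,x_{\bar d},M_1-\sum_i u^1_ix_i,\dots,M_k-\sum_i u^k_ix_i)$ for $i=1,\dots,\bar d$; $J(x^* )$ denotes the Jacobian of $(g_1,\dots,g_{\bar d})$ at $(x^*_1,\dots,x^*_{\bar d})$. Union (controlled) system: $x_1'=f_1(x)-z(\theta x_1-\mu)$, $z'=z(\theta x_1-\mu)$, $x_i'=f_i(x)$ for $i\ge 2$ (mass-action kinetics for the controller). Its conservation relations are $u^i\cdot x+u^i_1z=\bar M_i$, so it reduces to variables $(x_1,\dots,x_{\bar d},z)$ via $x_{\bar d+j}=\bar M_j-\sum_{i=1}^{\bar d}u^j_ix_i-u^j_1z$, giving functions $h_1,\dots,h_{\bar d}$ (obtained from $f_1-z(\theta x_1-\mu),f_2,\dots,f_{\bar d}$ by this substitution) and $h_{\bar d+1}=z(\theta x_1-\mu)$. $(x^*,z^* )$ is a positive steady state of the union system with this $x^*$ ($x^*_1=\mu/\theta$) and $z^*>0$ determined by the conservation relations and the initial data. $\bar J(x^*,z^* )$ is the Jacobian of $(h_1,\dots,h_{\bar d+1})$ in the variables $(x_1,\dots,x_{\bar d},z)$ at $(x^*,z^* )$. $H_2(\lambda)$ is the determinant of the $\bar d\times\bar d$ matrix obtained from $\lambda I-\bar J(x^*,z^* )$ by deleting its last row and its first column; explicitly its rows $i=1,\dots,\bar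 d$ are $(\lambda\delta_{i2}-\partial_2g_i(x^* ),\dots,\lambda\delta_{i\bar d}-\partial_{\bar d}g_i(x^* ),-\partial_zh_i(x^*,z^* ))$. *)

theory Defs
  imports "HOL-Analysis.Derivative" "Jordan_Normal_Form.Char_Poly"
begin

text \<open>Indexing convention: species are 0-indexed, X_1,...,X_d become indices 0,...,d-1.
  The first dbar = d - k coordinates are the free ones, coordinate dbar + j (j < k) is
  eliminated by the (j+1)-th conservation relation. The conservation vector u^(j+1) is
  the function u j :: nat => real (entries at indices < d).  The control species Z is
  the extra reduced variable with index dbar.\<close>

text \<open>A reaction is (source complex, product complex, rate constant).\<close>
type_synonym reaction = "(nat \<Rightarrow> nat) \<times> (nat \<Rightarrow> nat) \<times> real"

definition valid_network :: "nat \<Rightarrow> reaction list \<Rightarrow> bool" where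
  "valid_network d R \<longleftrightarrow>
     (\<forall>(y, y', \<kappa>) \<in> set R. 0 < \<kappa> \<and> y \<noteq> y' \<and> (\<forall>l. d \<le> l \<longrightarrow> y l = 0 \<and> y' l = 0))"

definition mass_action :: "nat \<Rightarrow> reaction list \<Rightarrow> nat \<Rightarrow> (nat \<Rightarrow> real) \<Rightarrow> real" where
  "mass_action d R i x =
     (\<Sum>r\<leftarrow>R. (case r of (y, y', \<kappa>) \<Rightarrow>
         \<kappa> * (real (y' i) - real (y i)) * (\<Prod>l<d. x l ^ y l)))"

definition partial :: "nat \<Rightarrow> ((nat \<Rightarrow> real) \<Rightarrow> real) \<Rightarrow> (nat \<Rightarrow> real) \<Rightarrow> real" where
  "partial j F y = deriv (\<lambda>t. F (y(j := t))) (y j)"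

definition all_eigs_neg :: "real mat \<Rightarrow> bool" where
  "all_eigs_neg A \<longleftrightarrow> (\<forall>ev. eigenvalue (map_mat complex_of_real A) ev \<longrightarrow> Re ev < 0)"

definition lift_orig :: "nat \<Rightarrow> nat \<Rightarrow> (nat \<Rightarrow> nat \<Rightarrow> real) \<Rightarrow> (nat \<Rightarrow> real)
    \<Rightarrow> (nat \<Rightarrow> real) \<Rightarrow> (nat \<Rightarrow> real)" where
  "lift_orig d k u M y = (\<lambda>i. if i < d - k then y i
      else if i < d then M (i - (d - k)) - (\<Sum>l < d - k. u (i - (d - k)) l * y l) else 0)"

definition g_red :: "nat \<Rightarrow> nat \<Rightarrow> reaction list \<Rightarrow> (nat \<Rightarrow> nat \<Rightarrow> real) \<Rightarrow> (nat \<Rightarrow> real)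
    \<Rightarrow> nat \<Rightarrow> (nat \<Rightarrow> real) \<Rightarrow> real" where
  "g_red d k R u M i y = mass_action d R i (lift_orig d k u M y)"

definition cons_val :: "nat \<Rightarrow> (nat \<Rightarrow> nat \<Rightarrow> real) \<Rightarrow> (nat \<Rightarrow> real) \<Rightarrow> nat \<Rightarrow> real" where
  "cons_val d u x j = (\<Sum>i<d. u j i * x i)"

definition J_red :: "nat \<Rightarrow> nat \<Rightarrow> reaction list \<Rightarrow> (nat \<Rightarrow> nat \<Rightarrow> real) \<Rightarrow> (nat \<Rightarrow> real) \<Rightarrow> real mat" where
  "J_red d k R u xs = mat (d - k) (d - k)
      (\<lambda>(i, j). partial j (g_red d k R u (cons_val d u xs) i) xs)"

definition lift_union :: "nat \<Rightarrow> nat \<Rightarrow> (nat \<Rightarrow> nat \<Rightarrow> real) \<Rightarrow> (nat \<Rightarrow> real)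
    \<Rightarrow> (nat \<Rightarrow> real) \<Rightarrow> (nat \<Rightarrow> real)" where
  "lift_union d k u Mb y = (\<lambda>i. if i < d - k then y i
      else if i < d then Mb (i - (d - k)) - (\<Sum>l < d - k. u (i - (d - k)) l * y l)
               - u (i - (d - k)) 0 * y (d - k)
      else 0)"

definition h_union :: "nat \<Rightarrow> nat \<Rightarrow> reaction list \<Rightarrow> (nat \<Rightarrow> nat \<Rightarrow> real) \<Rightarrow> real \<Rightarrow> real
    \<Rightarrow> (nat \<Rightarrow> real) \<Rightarrow> nat \<Rightarrow> (nat \<Rightarrow> real) \<Rightarrow> real" where
  "h_union d k R u \<theta> \<mu> Mb i y =
     (if i < d - k then
        mass_action d R i (lift_union d k u Mb y)
          - (if i = 0 then y (d - k) * (\<theta> * y 0 - \<mu>) else 0)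
      else y (d - k) * (\<theta> * y 0 - \<mu>))"

definition cons_val_union :: "nat \<Rightarrow> (nat \<Rightarrow> nat \<Rightarrow> real) \<Rightarrow> (nat \<Rightarrow> real) \<Rightarrow> real \<Rightarrow> nat \<Rightarrow> real" where
  "cons_val_union d u x z j = (\<Sum>i<d. u j i * x i) + u j 0 * z"

definition red_point :: "nat \<Rightarrow> (nat \<Rightarrow> real) \<Rightarrow> real \<Rightarrow> (nat \<Rightarrow> real)" where
  "red_point dbar xs zs = (\<lambda>i. if i < dbar then xs i else if i = dbar then zs else 0)"

definition Jbar_union :: "nat \<Rightarrow> nat \<Rightarrow> reaction list \<Rightarrow> (nat \<Rightarrow> nat \<Rightarrow> real) \<Rightarrow> real \<Rightarrow> real
    \<Rightarrow> (nat \<Rightarrow> real) \<Rightarrow> real \<Rightarrow> real mat" where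
  "Jbar_union d k R u \<theta> \<mu> xs zs = mat (d - k + 1) (d - k + 1)
      (\<lambda>(i, j). partial j (h_union d k R u \<theta> \<mu> (cons_val_union d u xs zs) i)
                 (red_point (d - k) xs zs))"

text \<open>H_2(lambda): determinant of lambda I - Jbar with last row and first column deleted;
  row i (0-indexed, i < dbar) is
  (lambda delta_(i,1) - d_1 g_i, ..., lambda delta_(i,dbar-1) - d_(dbar-1) g_i, - d_z h_i).\<close>
definition H2 :: "nat \<Rightarrow> nat \<Rightarrow> reaction list \<Rightarrow> (nat \<Rightarrow> nat \<Rightarrow> real) \<Rightarrow> real \<Rightarrow> real
    \<Rightarrow> (nat \<Rightarrow> real) \<Rightarrow> real \<Rightarrow> real \<Rightarrow> real" where
  "H2 d k R u \<theta> \<mu> xs zs lam = det (mat (d - k) (d - k) (\<lambda>(i, c).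
      if c + 1 < d - k then
        (if i = c + 1 then lam else 0) - partial (c + 1) (g_red d k R u (cons_val d u xs) i) xs
      else - partial (d - k) (h_union d k R u \<theta> \<mu> (cons_val_union d u xs zs) i)
                 (red_point (d - k) xs zs)))"

end

theory Submission
  imports Defs
begin

text \<open>At the steady state \<open>\<theta> x\<^sub>1 = \<mu>\<close> the controller term \<open>z (\<theta> x\<^sub>1 - \<mu>)\<close> has differential
  \<open>\<theta> z\<^sup>* dx\<^sub>1\<close>, so with \<open>\<epsilon> = \<theta> z\<^sup>*\<close> the Jacobian \<open>J\<^sub>\<epsilon>\<close> of the reduced union system
  is the bordered matrix \<open>[[J - \<epsilon> E\<^sub>1\<^sub>1, b], [\<epsilon> e\<^sub>1\<^sup>T, 0]]\<close> with \<open>J = J(x\<^sup>*)\<close>. Expanding along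
  the last row, \<open>det (J\<^sub>\<epsilon> - \<lambda>I) = \<epsilon> (-1)\<^sup>d\<^sup>' G(\<lambda>) - \<lambda> det (J - \<epsilon> E\<^sub>1\<^sub>1 - \<lambda>I)\<close> for a minor \<open>G\<close> with
  \<open>H\<^sub>2(0) = (-1)\<^sup>d\<^sup>' G(0)\<close>, where \<open>d' = d - k\<close>; the sign condition says \<open>G(0) < 0\<close>.

  If stability failed for arbitrarily small \<open>\<epsilon> > 0\<close>, there would be \<open>\<epsilon>\<^sub>m \<rightarrow> 0\<close> and eigenvalues \<open>\<lambda>\<^sub>m\<close>
  with \<open>Re \<lambda>\<^sub>m \<ge> 0\<close>; they are bounded, so a subsequence converges to some \<open>L\<close>. In the limit
  \<open>L det (J - L I) = 0\<close>, and \<open>J\<close> is Hurwitz, so \<open>L = 0\<close>. Then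
  \<open>\<lambda>\<^sub>m / \<epsilon>\<^sub>m = (-1)\<^sup>d\<^sup>' G(\<lambda>\<^sub>m) / det (J - \<epsilon>\<^sub>m E\<^sub>1\<^sub>1 - \<lambda>\<^sub>m I) \<rightarrow> (-1)\<^sup>d\<^sup>' G(0) / det J < 0\<close>, because
  \<open>(-1)\<^sup>d\<^sup>' det J > 0\<close> for a Hurwitz matrix: a contradiction. Only \<open>\<epsilon> = \<theta> z\<^sup>*\<close> matters, so every
  \<open>z\<^sup>* > 0\<close> works once \<open>\<theta> < \<delta> / z\<^sup>*\<close>.\<close>

lemma tendsto_det_mat:
  fixes f :: "'b \<Rightarrow> nat \<Rightarrow> nat \<Rightarrow> 'a::{real_normed_algebra_1, comm_ring_1}"
  assumes "\<And>i j. i < n \<Longrightarrow> j < n \<Longrightarrow> ((\<lambda>x. f x i j) \<longlongrightarrow> g i j) F"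
  shows "((\<lambda>x. det (mat n n (\<lambda>(i, j). f x i j))) \<longlongrightarrow> det (mat n n (\<lambda>(i, j). g i j))) F"
proof -
  have leibniz: "det (mat n n (\<lambda>(i, j). h i j))
      = (\<Sum>p\<in>{p. p permutes {0..<n}}. signof p * (\<Prod>i=0..<n. h i (p i)))" for h
    by (subst det_def'[of _ n]) (auto intro!: sum.cong prod.cong simp: permutes_in_image)
  show ?thesis
    unfolding leibniz
    by (auto intro!: tendsto_sum tendsto_mult tendsto_prod assms simp: permutes_in_image)
qed

lemma eigenvalue_norm_le_sum_norm_entries:
  assumes A: "A \<in> carrier_mat n n" and ev: "eigenvalue A (l :: 'a::real_normed_field)"
  shows "norm l \<le> (\<Sum>i<n. \<Sum>j<n. norm (A $$ (i, j)))"
proof -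
  obtain v where v: "v \<in> carrier_vec n" "v \<noteq> 0\<^sub>v n" "A *\<^sub>v v = l \<cdot>\<^sub>v v"
    using ev A unfolding eigenvalue_def eigenvector_def by auto
  define m where "m = Max ((\<lambda>i. norm (v $ i)) ` {..<n})"
  have m_ge: "norm (v $ j) \<le> m" if "j < n" for j
    unfolding m_def using that by (intro Max_ge) auto
  obtain i0 where i0: "i0 < n" "v $ i0 \<noteq> 0"
    using v(1,2) by (metis carrier_vecD eq_vecI index_zero_vec)
  have "m \<in> (\<lambda>i. norm (v $ i)) ` {..<n}"
    unfolding m_def using i0(1) by (intro Max_in) auto
  then obtain i where i: "i < n" "norm (v $ i) = m"
    by auto
  have m_pos: "0 < m"
    using m_ge[OF i0(1)] i0(2) by (meson less_le_trans zero_less_norm_iff)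
  have "(l \<cdot>\<^sub>v v) $ i = (A *\<^sub>v v) $ i"
    using v(3) by simp
  then have "l * v $ i = (\<Sum>j<n. A $$ (i, j) * v $ j)"
    using A v(1) i by (auto simp: scalar_prod_def atLeast0LessThan)
  then have "norm l * m = norm (\<Sum>j<n. A $$ (i, j) * v $ j)"
    using i by (metis norm_mult)
  also have "\<dots> \<le> (\<Sum>j<n. norm (A $$ (i, j)) * norm (v $ j))"
    by (rule order.trans[OF norm_sum]) (simp add: norm_mult)
  also have "\<dots> \<le> (\<Sum>j<n. norm (A $$ (i, j))) * m"
    unfolding sum_distrib_right by (intro sum_mono mult_left_mono m_ge) auto
  finally have "norm l \<le> (\<Sum>j<n. norm (A $$ (i, j)))"
    using m_pos by simp
  also have "\<dots> \<le> (\<Sum>i<n. \<Sum>j<n. norm (A $$ (i, j)))"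
    using i by (intro member_le_sum) (auto intro: sum_nonneg)
  finally show ?thesis .
qed

lemma char_matrix_zero: "A \<in> carrier_mat n n \<Longrightarrow> char_matrix A 0 = A"
  by (auto simp: char_matrix_def intro!: eq_matI)

lemma all_eigs_neg_char_poly_nonzero:
  assumes J: "J \<in> carrier_mat n n" and H: "all_eigs_neg J" and x: "0 \<le> x"
  shows "poly (char_poly J) x \<noteq> 0"
proof
  assume "poly (char_poly J) x = 0"
  then have "eigenvalue J x"
    using eigenvalue_root_char_poly[OF J] by simp
  then have "eigenvalue (map_mat complex_of_real J) (of_real x)"
    by (rule of_real_hom.eigenvalue_hom[OF J])
  with H x show False
    unfolding all_eigs_neg_def by fastforce
qed

lemma all_eigs_neg_det_sign:
  assumes J: "J \<in> carrier_mat n n" and H: "all_eigs_neg J"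
  shows "0 < (-1) ^ n * det J"
proof -
  define p where "p = char_poly J"
  have p0: "poly p 0 = (-1) ^ n * det J"
  proof -
    have "- J = (-1) \<cdot>\<^sub>m J"
      using J by (auto intro!: eq_matI)
    then show ?thesis
      unfolding p_def char_poly_matrix[OF J] char_matrix_zero[OF J] using J by simp
  qed
  have monic: "lead_coeff p = 1"
    using degree_monic_char_poly[OF J] unfolding p_def by simp
  obtain T where T: "\<And>x. T \<le> x \<Longrightarrow> 1 \<le> poly p x"
    using poly_pinfty_gt_lc[of p] monic by auto
  have "0 < poly p 0"
  proof (rule ccontr)
    assume "\<not> 0 < poly p 0"
    then have "poly p 0 < 0"
      using all_eigs_neg_char_poly_nonzero[OF J H, of 0] unfolding p_def by linarith
    moreover have "0 < poly p (max T 1)"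
      using T[of "max T 1"] by simp
    ultimately obtain x where "0 < x" "poly p x = 0"
      using poly_IVT_pos[of 0 "max T 1" p] by (auto simp: less_max_iff_disj)
    then show False
      using all_eigs_neg_char_poly_nonzero[OF J H, of x] unfolding p_def by simp
  qed
  with p0 show ?thesis by simp
qed

text \<open>\<open>feedback_mat n J b e = [[J - e E\<^sub>1\<^sub>1, b], [e e\<^sub>1\<^sup>T, 0]]\<close>. Deleting the last row of its
  characteristic matrix \<open>A - \<lambda>I\<close> and the first resp. last column leaves \<open>feedback_minor\<close>
  resp. \<open>corner_char_mat\<close>.\<close>

definition feedback_mat :: "nat \<Rightarrow> 'a::comm_ring_1 mat \<Rightarrow> (nat \<Rightarrow> 'a) \<Rightarrow> 'a \<Rightarrow> 'a mat" where
  "feedback_mat n J b e = mat (Suc n) (Suc n) (\<lambda>(i, j).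
     if i < n then (if j < n then J $$ (i, j) - (if i = 0 \<and> j = 0 then e else 0) else b i)
     else (if j = 0 then e else 0))"

definition feedback_minor :: "nat \<Rightarrow> 'a::comm_ring_1 mat \<Rightarrow> (nat \<Rightarrow> 'a) \<Rightarrow> 'a \<Rightarrow> 'a mat" where
  "feedback_minor n J b l = mat n n (\<lambda>(i, c).
     if Suc c < n then J $$ (i, Suc c) - (if i = Suc c then l else 0) else b i)"

definition corner_char_mat :: "nat \<Rightarrow> 'a::comm_ring_1 mat \<Rightarrow> 'a \<Rightarrow> 'a \<Rightarrow> 'a mat" where
  "corner_char_mat n J e l = mat n n (\<lambda>(i, j).
     J $$ (i, j) - (if i = 0 \<and> j = 0 then e else 0) - (if i = j then l else 0))"

lemma feedback_mat_carrier [simp]: "feedback_mat n J b e \<in> carrier_mat (Suc n) (Suc n)"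
  and dim_feedback_mat [simp]:
    "dim_row (feedback_mat n J b e) = Suc n" "dim_col (feedback_mat n J b e) = Suc n"
  by (simp_all add: feedback_mat_def)

lemma corner_char_mat_zero:
  "J \<in> carrier_mat n n \<Longrightarrow> corner_char_mat n J 0 l = char_matrix J l"
  by (auto simp: corner_char_mat_def char_matrix_def intro!: eq_matI)

lemma of_real_feedback_mat:
  assumes "J \<in> carrier_mat n n"
  shows "map_mat of_real (feedback_mat n J b e)
       = feedback_mat n (map_mat of_real J) (of_real \<circ> b) (of_real e)"
  using assms by (auto simp: feedback_mat_def intro!: eq_matI)

lemma det_char_matrix_feedback_mat:
  fixes J :: "'a::field mat"
  assumes n: "1 \<le> n"
  shows "det (char_matrix (feedback_mat n J b e) l)
       = e * (-1) ^ n * det (feedback_minor n J b l) - l * det (corner_char_mat n J e l)"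
proof -
  define M where "M = char_matrix (feedback_mat n J b e) l"
  have M: "M \<in> carrier_mat (Suc n) (Suc n)"
    unfolding M_def by simp
  have M_entry: "M $$ (i, j) = feedback_mat n J b e $$ (i, j) - (if i = j then l else 0)"
    if "i < Suc n" "j < Suc n" for i j
    using that unfolding M_def char_matrix_def feedback_mat_def by auto
  have minor_0: "mat_delete M n 0 = feedback_minor n J b l"
    using M n by (auto simp: mat_delete_def feedback_minor_def M_entry feedback_mat_def intro!: eq_matI)
  have minor_n: "mat_delete M n n = corner_char_mat n J e l"
    using M n by (auto simp: mat_delete_def corner_char_mat_def M_entry feedback_mat_def intro!: eq_matI)
  have "det M = (\<Sum>j<Suc n. M $$ (n, j) * cofactor M n j)"
    by (rule laplace_expansion_row[OF M]) simp
  also have "\<dots> = e * cofactor M n 0 - l * cofactor M n n"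
  proof -
    have "(\<Sum>j<n. M $$ (n, j) * cofactor M n j) = (\<Sum>j<n. if j = 0 then e * cofactor M n 0 else 0)"
      by (rule sum.cong) (auto simp: M_entry feedback_mat_def)
    then show ?thesis
      using n by (simp add: M_entry feedback_mat_def sum.delta)
  qed
  finally show ?thesis
    unfolding M_def[symmetric] cofactor_def minor_0 minor_n
    by (simp add: power_add flip: mult_2)
qed

lemma eigenvalue_feedback_mat:
  fixes J :: "'a::field mat"
  assumes "1 \<le> n" and "eigenvalue (feedback_mat n J b e) l"
  shows "l * det (corner_char_mat n J e l) = e * (-1) ^ n * det (feedback_minor n J b l)"
  using assms det_char_matrix_feedback_mat[OF assms(1)] eigenvalue_det[OF feedback_mat_carrier]
  by (metis eq_iff_diff_eq_0)

lemma tendsto_det_corner_char_mat: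
  fixes J :: "complex mat"
  assumes "(e \<longlongrightarrow> e0) F" and "(l \<longlongrightarrow> L) F"
  shows "((\<lambda>x. det (corner_char_mat n J (e x) (l x))) \<longlongrightarrow> det (corner_char_mat n J e0 L)) F"
  unfolding corner_char_mat_def
  by (rule tendsto_det_mat) (auto intro!: tendsto_intros assms)

lemma tendsto_det_feedback_minor:
  fixes J :: "complex mat"
  assumes "(l \<longlongrightarrow> L) F"
  shows "((\<lambda>x. det (feedback_minor n J b (l x))) \<longlongrightarrow> det (feedback_minor n J b L)) F"
  unfolding feedback_minor_def
  by (rule tendsto_det_mat) (auto intro!: tendsto_intros assms)

context
  fixes n :: nat and J :: "real mat" and b :: "nat \<Rightarrow> real"
    and e :: "nat \<Rightarrow> real" and l :: "nat \<Rightarrow> complex" and L :: complex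
  assumes n: "1 \<le> n" and J: "J \<in> carrier_mat n n" and hurwitz: "all_eigs_neg J"
    and e_lim: "e \<longlonglongrightarrow> 0" and l_lim: "l \<longlonglongrightarrow> L"
    and l_eig: "\<And>m. eigenvalue (map_mat of_real (feedback_mat n J b (e m))) (l m)"
    and l_unstable: "\<And>m. 0 \<le> Re (l m)"
begin

private abbreviation "Jc \<equiv> map_mat complex_of_real J"
private abbreviation "bc \<equiv> complex_of_real \<circ> b"

private lemma Jc: "Jc \<in> carrier_mat n n"
  using J by simp

private lemma char_eq:
  "l m * det (corner_char_mat n Jc (of_real (e m)) (l m))
     = of_real (e m) * (-1) ^ n * det (feedback_minor n Jc bc (l m))"
  using eigenvalue_feedback_mat[OF n] l_eig[of m] unfolding of_real_feedback_mat[OF J] .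

private lemma e_lim_complex: "(\<lambda>m. complex_of_real (e m)) \<longlonglongrightarrow> 0"
  using tendsto_of_real[OF e_lim] by simp

private lemma corner_lim:
  "(\<lambda>m. det (corner_char_mat n Jc (of_real (e m)) (l m))) \<longlonglongrightarrow> det (char_matrix Jc L)"
  using tendsto_det_corner_char_mat[OF e_lim_complex l_lim, of n Jc] corner_char_mat_zero[OF Jc] by simp

private lemma minor_lim:
  "(\<lambda>m. det (feedback_minor n Jc bc (l m))) \<longlonglongrightarrow> det (feedback_minor n Jc bc L)"
  by (rule tendsto_det_feedback_minor[OF l_lim])

lemma feedback_eigenvalue_limit_zero: "L = 0"
proof (rule ccontr)
  assume "L \<noteq> 0"
  have "(\<lambda>m. l m * det (corner_char_mat n Jc (of_real (e m)) (l m))) \<longlonglongrightarrow> L * det (char_matrix Jc L)"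
    by (intro tendsto_intros l_lim corner_lim)
  moreover have "(\<lambda>m. l m * det (corner_char_mat n Jc (of_real (e m)) (l m)))
      \<longlonglongrightarrow> 0 * (-1) ^ n * det (feedback_minor n Jc bc L)"
    unfolding char_eq by (intro tendsto_intros e_lim_complex minor_lim)
  ultimately have "L * det (char_matrix Jc L) = 0"
    using LIMSEQ_unique by fastforce
  then have "det (char_matrix Jc L) = 0"
    using \<open>L \<noteq> 0\<close> by simp
  then have "eigenvalue Jc L"
    using eigenvalue_det[OF Jc] by simp
  then have "Re L < 0"
    using hurwitz unfolding all_eigs_neg_def by blast
  moreover have "0 \<le> Re L"
    by (rule LIMSEQ_le_const[OF tendsto_Re[OF l_lim]]) (use l_unstable in auto)
  ultimately show False by simp
qed

lemma feedback_unstable_eigenvalues_absurd: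
  assumes e_pos: "\<And>m. 0 < e m" and minor_neg: "det (feedback_minor n J b 0) < 0"
  shows False
proof -
  define g where "g = det (feedback_minor n J b 0)"
  have det_sign: "0 < (-1) ^ n * det J"
    by (rule all_eigs_neg_det_sign[OF J hurwitz])
  have corner_0: "det (char_matrix Jc 0) = of_real (det J)"
    using char_matrix_zero[OF Jc] by simp
  have minor_0: "det (feedback_minor n Jc bc 0) = of_real g"
  proof -
    have "feedback_minor n Jc bc 0 = map_mat of_real (feedback_minor n J b 0)"
      using J by (auto simp: feedback_minor_def intro!: eq_matI)
    then show ?thesis
      unfolding g_def by (simp add: of_real_hom.hom_det)
  qed
  define w where "w m = (-1) ^ n * det (feedback_minor n Jc bc (l m))
      / det (corner_char_mat n Jc (of_real (e m)) (l m))" for m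
  have "w \<longlonglongrightarrow> (-1) ^ n * of_real g / of_real (det J)"
    unfolding w_def using corner_lim minor_lim det_sign
    unfolding feedback_eigenvalue_limit_zero corner_0 minor_0
    by (intro tendsto_intros) auto
  moreover have "Re ((-1) ^ n * of_real g / of_real (det J)) < 0"
    using det_sign minor_neg unfolding g_def
    by (cases "even n") (auto simp: divide_neg_pos divide_neg_neg)
  ultimately have "eventually (\<lambda>m. Re (w m) < 0) sequentially"
    using order_tendstoD(2)[OF tendsto_Re] by blast
  moreover have "eventually (\<lambda>m. det (corner_char_mat n Jc (of_real (e m)) (l m)) \<noteq> 0) sequentially"
    using tendsto_imp_eventually_ne[OF corner_lim] det_sign
    unfolding feedback_eigenvalue_limit_zero corner_0 by force
  ultimately have "eventually (\<lambda>m. Re (w m) < 0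
      \<and> det (corner_char_mat n Jc (of_real (e m)) (l m)) \<noteq> 0) sequentially"
    by (rule eventually_conj)
  then obtain m where m: "Re (w m) < 0" "det (corner_char_mat n Jc (of_real (e m)) (l m)) \<noteq> 0"
    unfolding eventually_sequentially by blast
  have "l m = of_real (e m) * w m"
    using char_eq[of m] m(2) unfolding w_def by (simp add: field_simps)
  then have "Re (l m) < 0"
    using e_pos[of m] m(1) by (simp add: mult_pos_neg)
  with l_unstable[of m] show False by simp
qed

end

lemma norm_eigenvalue_feedback_mat_le:
  fixes J :: "real mat"
  assumes e: "\<bar>e\<bar> \<le> 1" and ev: "eigenvalue (map_mat complex_of_real (feedback_mat n J b e)) l"
  shows "norm l \<le> (\<Sum>i<Suc n. \<Sum>j<Suc n. \<bar>feedback_mat n J b 0 $$ (i, j)\<bar> + 1)"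
proof -
  have entry: "\<bar>feedback_mat n J b e $$ (i, j)\<bar> \<le> \<bar>feedback_mat n J b 0 $$ (i, j)\<bar> + 1"
    if "i < Suc n" "j < Suc n" for i j
    using that e abs_triangle_ineq4[of "J $$ (0, 0)" e] by (auto simp: feedback_mat_def)
  have "norm l \<le> (\<Sum>i<Suc n. \<Sum>j<Suc n. norm (map_mat complex_of_real (feedback_mat n J b e) $$ (i, j)))"
    by (rule eigenvalue_norm_le_sum_norm_entries[OF _ ev]) simp
  also have "\<dots> \<le> (\<Sum>i<Suc n. \<Sum>j<Suc n. \<bar>feedback_mat n J b 0 $$ (i, j)\<bar> + 1)"
    by (intro sum_mono) (auto intro: entry)
  finally show ?thesis .
qed

lemma all_eigs_neg_feedback_mat:
  assumes n: "1 \<le> n" and J: "J \<in> carrier_mat n n" and hurwitz: "all_eigs_neg J"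
    and minor_neg: "det (feedback_minor n J b 0) < 0"
  shows "\<exists>\<delta>>0. \<forall>e. 0 < e \<and> e < \<delta> \<longrightarrow> all_eigs_neg (feedback_mat n J b e)"
proof (rule ccontr)
  assume "\<not> ?thesis"
  then have "\<forall>m. \<exists>e l. 0 < e \<and> e < inverse (Suc m) \<and> 0 \<le> Re l
      \<and> eigenvalue (map_mat complex_of_real (feedback_mat n J b e)) l"
    unfolding all_eigs_neg_def by (metis not_less of_nat_0_less_iff positive_imp_inverse_positive zero_less_Suc)
  then obtain e l where e: "\<And>m. 0 < e m" "\<And>m. e m < inverse (Suc m)"
    and l: "\<And>m. 0 \<le> Re (l m)" "\<And>m. eigenvalue (map_mat complex_of_real (feedback_mat n J b (e m))) (l m)"
    by metis
  have e_lim: "e \<longlonglongrightarrow> 0"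
  proof (rule tendsto_sandwich[of "\<lambda>_. 0" _ _ "\<lambda>m. inverse (real (Suc m))"])
    show "\<forall>\<^sub>F m in sequentially. 0 \<le> e m"
      by (intro always_eventually allI less_imp_le e(1))
    show "\<forall>\<^sub>F m in sequentially. e m \<le> inverse (real (Suc m))"
      by (intro always_eventually allI less_imp_le e(2))
    show "(\<lambda>m. inverse (real (Suc m))) \<longlonglongrightarrow> 0"
      by (rule LIMSEQ_inverse_real_of_nat)
  qed simp
  have "\<bar>e m\<bar> \<le> 1" for m
    using e(1)[of m] e(2)[of m] inverse_le_1_iff[of "real (Suc m)"] by simp
  then have "bounded (range l)"
    unfolding bounded_iff using norm_eigenvalue_feedback_mat_le l(2) by blast
  then obtain L r where r: "strict_mono r" and lr: "(l \<circ> r) \<longlonglongrightarrow> L"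
    using bounded_imp_convergent_subsequence by blast
  show False
    by (rule feedback_unstable_eigenvalues_absurd[OF n J hurwitz LIMSEQ_subseq_LIMSEQ[OF e_lim r] lr])
      (use e l minor_neg in auto)
qed

lemma differentiable_prod_lessThan:
  fixes f :: "nat \<Rightarrow> 'a::real_normed_vector \<Rightarrow> real"
  assumes "\<And>l. f l differentiable (at x)"
  shows "(\<lambda>t. \<Prod>l<N. f l t) differentiable (at x)"
  by (induction N) (simp_all add: assms)

lemma differentiable_mass_action:
  assumes "\<And>l. (\<lambda>t. X t l) differentiable (at x)"
  shows "(\<lambda>t. mass_action d R i (X t)) differentiable (at x)"
proof (induction R)
  case Nil
  then show ?case by (simp add: mass_action_def)
next
  case (Cons r R)
  obtain y y' \<kappa> where r: "r = (y, y', \<kappa>)"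
    by (cases r) auto
  have "(\<lambda>t. \<Prod>l<d. X t l ^ y l) differentiable (at x)"
    by (intro differentiable_prod_lessThan differentiable_power assms)
  with Cons show ?case
    by (simp add: mass_action_def r)
qed

lemma differentiable_lift_orig_upd:
  "(\<lambda>t. lift_orig d k u M (y(j := t)) l) differentiable (at x)"
proof -
  have upd: "(\<lambda>t. (y(j := t)) m) differentiable (at x)" for m
    by (cases "m = j") simp_all
  show ?thesis
    unfolding lift_orig_def
    by (cases "l < d - k"; cases "l < d")
      (auto intro!: differentiable_diff differentiable_sum differentiable_mult upd simp del: fun_upd_apply)
qed

lemma lift_union_red_point_upd:
  assumes "j < d - k"
  shows "lift_union d k u (cons_val_union d u xs zs) ((red_point (d - k) xs zs)(j := t))
       = lift_orig d k u (cons_val d u xs) (xs(j := t))"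
proof
  fix l
  have "(\<Sum>l'<d - k. u m l' * ((red_point (d - k) xs zs)(j := t)) l') = (\<Sum>l'<d - k. u m l' * (xs(j := t)) l')" for m
    by (rule sum.cong) (auto simp: red_point_def)
  then show "lift_union d k u (cons_val_union d u xs zs) ((red_point (d - k) xs zs)(j := t)) l
       = lift_orig d k u (cons_val d u xs) (xs(j := t)) l"
    using assms unfolding lift_union_def lift_orig_def
    by (auto simp: red_point_def cons_val_union_def cons_val_def)
qed

text \<open>Derivative in \<open>z\<close> of the reaction part of \<open>h\<^sub>i\<close>; at the steady state it is all of \<open>\<partial>\<^sub>z h\<^sub>i\<close>.\<close>
definition z_column :: "nat \<Rightarrow> nat \<Rightarrow> reaction list \<Rightarrow> (nat \<Rightarrow> nat \<Rightarrow> real) \<Rightarrow> (nat \<Rightarrow> real)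
    \<Rightarrow> real \<Rightarrow> nat \<Rightarrow> real" where
  "z_column d k R u xs zs i = partial (d - k)
     (\<lambda>y. mass_action d R i (lift_union d k u (cons_val_union d u xs zs) y)) (red_point (d - k) xs zs)"

lemma partial_h_union_free:
  assumes j: "j < d - k" and i: "i < d - k"
  shows "partial j (h_union d k R u \<theta> \<mu> (cons_val_union d u xs zs) i) (red_point (d - k) xs zs)
       = partial j (g_red d k R u (cons_val d u xs) i) xs - (if i = 0 \<and> j = 0 then zs * \<theta> else 0)"
proof -
  define \<Phi> where "\<Phi> t = g_red d k R u (cons_val d u xs) i (xs(j := t))" for t
  define \<psi> where "\<psi> t = (if i = 0 then zs * (\<theta> * (if j = 0 then t else xs 0) - \<mu>) else 0)" for t
  have h_eq: "(\<lambda>t. h_union d k R u \<theta> \<mu> (cons_val_union d u xs zs) i ((red_point (d - k) xs zs)(j := t)))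
      = (\<lambda>t. \<Phi> t - \<psi> t)"
    using i j unfolding h_union_def \<Phi>_def \<psi>_def g_red_def lift_union_red_point_upd[OF j]
    by (auto simp: red_point_def)
  have "\<Phi> differentiable (at (xs j))"
    unfolding \<Phi>_def g_red_def by (intro differentiable_mass_action differentiable_lift_orig_upd)
  then have "(\<Phi> has_real_derivative deriv \<Phi> (xs j)) (at (xs j))"
    using DERIV_deriv_iff_real_differentiable by blast
  moreover have "(\<psi> has_real_derivative (if i = 0 \<and> j = 0 then zs * \<theta> else 0)) (at (xs j))"
    unfolding \<psi>_def by (cases "i = 0"; cases "j = 0") (auto intro!: derivative_eq_intros)
  ultimately have "deriv (\<lambda>t. \<Phi> t - \<psi> t) (xs j) = deriv \<Phi> (xs j) - (if i = 0 \<and> j = 0 then zs * \<theta> else 0)"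
    by (intro DERIV_imp_deriv DERIV_diff)
  moreover have "red_point (d - k) xs zs j = xs j"
    using j by (simp add: red_point_def)
  ultimately show ?thesis
    unfolding partial_def h_eq \<Phi>_def by simp
qed

lemma partial_h_union_z:
  assumes i: "i < d - k" and steady: "\<theta> * xs 0 = \<mu>"
  shows "partial (d - k) (h_union d k R u \<theta> \<mu> (cons_val_union d u xs zs) i) (red_point (d - k) xs zs)
       = z_column d k R u xs zs i"
proof -
  have "(\<lambda>t. h_union d k R u \<theta> \<mu> (cons_val_union d u xs zs) i ((red_point (d - k) xs zs)(d - k := t)))
      = (\<lambda>t. mass_action d R i (lift_union d k u (cons_val_union d u xs zs) ((red_point (d - k) xs zs)(d - k := t))))"
    using i steady by (auto simp: h_union_def red_point_def)
  then show ?thesis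
    unfolding partial_def z_column_def by simp
qed

lemma partial_h_union_control:
  assumes j: "j \<le> d - k" and n: "0 < d - k" and steady: "\<theta> * xs 0 = \<mu>"
  shows "partial j (h_union d k R u \<theta> \<mu> Mb (d - k)) (red_point (d - k) xs zs)
       = (if j = 0 then zs * \<theta> else 0)"
proof (cases "j = 0")
  case True
  have "(\<lambda>t. h_union d k R u \<theta> \<mu> Mb (d - k) ((red_point (d - k) xs zs)(j := t))) = (\<lambda>t. zs * (\<theta> * t - \<mu>))"
    using True n by (auto simp: h_union_def red_point_def)
  moreover have "((\<lambda>t. zs * (\<theta> * t - \<mu>)) has_real_derivative zs * \<theta>) (at (red_point (d - k) xs zs j))"
    by (auto intro!: derivative_eq_intros)
  ultimately show ?thesis
    using True unfolding partial_def by (simp add: DERIV_imp_deriv)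
next
  case False
  then have "(\<lambda>t. h_union d k R u \<theta> \<mu> Mb (d - k) ((red_point (d - k) xs zs)(j := t))) = (\<lambda>t. 0)"
    using j n steady by (auto simp: h_union_def red_point_def)
  then show ?thesis
    using False unfolding partial_def by simp
qed

lemma Jbar_union_eq_feedback_mat:
  assumes k: "k < d" and steady: "\<theta> * xs 0 = \<mu>"
  shows "Jbar_union d k R u \<theta> \<mu> xs zs
       = feedback_mat (d - k) (J_red d k R u xs) (z_column d k R u xs zs) (zs * \<theta>)"
proof (rule eq_matI)
  fix i j
  assume "i < dim_row (feedback_mat (d - k) (J_red d k R u xs) (z_column d k R u xs zs) (zs * \<theta>))"
    and "j < dim_col (feedback_mat (d - k) (J_red d k R u xs) (z_column d k R u xs zs) (zs * \<theta>))"
  then have "i \<le> d - k" "j \<le> d - k"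
    by (auto simp: feedback_mat_def)
  with k steady show "Jbar_union d k R u \<theta> \<mu> xs zs $$ (i, j)
      = feedback_mat (d - k) (J_red d k R u xs) (z_column d k R u xs zs) (zs * \<theta>) $$ (i, j)"
    by (cases "i < d - k"; cases "j < d - k")
      (auto simp: Jbar_union_def feedback_mat_def J_red_def partial_h_union_free
        partial_h_union_z partial_h_union_control)
qed (auto simp: Jbar_union_def feedback_mat_def)

lemma H2_sign_iff_det_feedback_minor_neg:
  assumes steady: "\<theta> * xs 0 = \<mu>"
  shows "(if odd (d - k) then 0 < H2 d k R u \<theta> \<mu> xs zs 0 else H2 d k R u \<theta> \<mu> xs zs 0 < 0)
     \<longleftrightarrow> det (feedback_minor (d - k) (J_red d k R u xs) (z_column d k R u xs zs) 0) < 0"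
proof -
  have "H2 d k R u \<theta> \<mu> xs zs 0
      = det ((-1) \<cdot>\<^sub>m feedback_minor (d - k) (J_red d k R u xs) (z_column d k R u xs zs) 0)"
    unfolding H2_def using steady
    by (intro arg_cong[where f = det] eq_matI)
      (auto simp: feedback_minor_def J_red_def partial_h_union_z)
  also have "\<dots> = (-1) ^ (d - k) * det (feedback_minor (d - k) (J_red d k R u xs) (z_column d k R u xs zs) 0)"
    by (simp add: feedback_minor_def)
  finally show ?thesis
    by (cases "even (d - k)") (auto simp: zero_less_mult_iff mult_less_0_iff)
qed

theorem mainTheorem3:
  fixes d k :: nat and R :: "reaction list" and u :: "nat \<Rightarrow> nat \<Rightarrow> real"
    and xs :: "nat \<Rightarrow> real"
  assumes net: "valid_network d R"
    and k_pos: "1 \<le> k" and k_lt: "k < d"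
    \<comment> \<open>(1) conservation relations u^j . x(t) = M_j, in the form [U | I] x = M\<close>
    and cons: "\<And>j x. j < k \<Longrightarrow> (\<forall>i<d. 0 < x i) \<Longrightarrow> (\<Sum>i<d. u j i * mass_action d R i x) = 0"
    and u_id: "\<And>j l. j < k \<Longrightarrow> l < k \<Longrightarrow> u j (d - k + l) = (if l = j then 1 else 0)"
    and u_nonneg: "\<And>j i. j < k \<Longrightarrow> i < d \<Longrightarrow> 0 \<le> u j i"
    and u11: "u 0 0 \<noteq> 0"
    \<comment> \<open>positive steady state x* of the original system\<close>
    and xs_pos: "\<And>i. i < d \<Longrightarrow> 0 < xs i"
    and xs_ss: "\<And>i. i < d \<Longrightarrow> mass_action d R i xs = 0"
    \<comment> \<open>(2) J(x*) is Hurwitz\<close>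
    and hurwitz: "all_eigs_neg (J_red d k R u xs)"
    \<comment> \<open>(3) sign condition on H_2(0), at any admissible theta, mu, z*\<close>
    and H2_sign: "\<And>\<theta> \<mu> zs. 0 < \<theta> \<Longrightarrow> 0 < \<mu> \<Longrightarrow> 0 < zs \<Longrightarrow> xs 0 = \<mu> / \<theta> \<Longrightarrow>
        (if odd (d - k) then H2 d k R u \<theta> \<mu> xs zs 0 > 0 else H2 d k R u \<theta> \<mu> xs zs 0 < 0)"
  shows "\<exists>Z0. \<forall>zs > Z0. \<exists>\<delta> > 0. \<forall>\<theta> \<mu>.
           0 < \<theta> \<and> \<theta> < \<delta> \<and> 0 < \<mu> \<and> \<mu> < \<delta> \<and> xs 0 = \<mu> / \<theta> \<longrightarrow>
           all_eigs_neg (Jbar_union d k R u \<theta> \<mu> xs zs)"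
proof (rule exI[of _ 0], intro allI impI)
  fix zs :: real
  assume zs: "0 < zs"
  let ?J = "J_red d k R u xs" and ?b = "z_column d k R u xs zs"
  have "0 < xs 0"
    using xs_pos k_lt by simp
  then have "det (feedback_minor (d - k) ?J ?b 0) < 0"
    using H2_sign[of 1 "xs 0" zs] zs H2_sign_iff_det_feedback_minor_neg[of 1 xs "xs 0"] by simp
  moreover have "1 \<le> d - k" "?J \<in> carrier_mat (d - k) (d - k)"
    using k_lt by (auto simp: J_red_def)
  ultimately obtain \<delta> where \<delta>: "0 < \<delta>"
    "\<And>e. 0 < e \<Longrightarrow> e < \<delta> \<Longrightarrow> all_eigs_neg (feedback_mat (d - k) ?J ?b e)"
    using all_eigs_neg_feedback_mat hurwitz by metis
  show "\<exists>\<delta>>0. \<forall>\<theta> \<mu>. 0 < \<theta> \<and> \<theta> < \<delta> \<and> 0 < \<mu> \<and> \<mu> < \<delta> \<and> xs 0 = \<mu> / \<theta> \<longrightarrow>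
      all_eigs_neg (Jbar_union d k R u \<theta> \<mu> xs zs)"
  proof (intro exI[of _ "\<delta> / zs"] conjI allI impI)
    fix \<theta> \<mu> :: real
    assume "0 < \<theta> \<and> \<theta> < \<delta> / zs \<and> 0 < \<mu> \<and> \<mu> < \<delta> / zs \<and> xs 0 = \<mu> / \<theta>"
    then have "\<theta> * xs 0 = \<mu>" "0 < zs * \<theta>" "zs * \<theta> < \<delta>"
      using zs by (auto simp: field_simps)
    then show "all_eigs_neg (Jbar_union d k R u \<theta> \<mu> xs zs)"
      using \<delta>(2) Jbar_union_eq_feedback_mat[OF k_lt] by simp
  qed (use \<delta>(1) zs in simp)
qed

end
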